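(* Fix $T\ge1$, $N_s\ge1$ storage devices, $N\ge 1$ net-capacity-surplus profiles $(P_t(k))_{t=1}^T$, and initial states of charge $S_{i,0}\ge 0$. For parameters $\overline{S}_i\ge S_{i,0}$, $\overline{x}_i\ge 0$ ($i=1,\dots,N_s$), let $v_k$ be the optimal value of problem (P2) for profile $k$ and $\mathrm{EUE}=\frac1N\sum_{k=1}^N\big(\sum_t p_t^-(k)+v_k\big)$. Then (P2) is always feasible, and for any device $i$, if its qualified capacity is $\overline{S}_i$, or $\overline{x}_i$, or more generally the parameters $(\overline{S}_i,\overline{x}_i)$ move along a ray $(\overline{S}_i^0+a\theta,\overline{x}_i^0+b\theta)$, $\theta\ge0$, $a,b\ge0$, $(a,b)\ne(0,0)$, with all other parameters fixed, then EUE as a function of this parameter is continuous, piecewise linear, and non-increasing; in particular the MRI $=-\partial\mathrm{EUE}/\partial\mathrm{QC}$ of device $i$ is non-negative wherever it exists, regardless of the profiles.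
   Context: For real $P_t$ (net capacity surplus at hour $t$), $p_t^+=\max\{P_t,0\}$, $p_t^-=\max\{-P_t,0\}$. Problem (P2) (multiple storage devices under reliability dispatch, no cross-charging): minimize over $S_{i,t}$ ($i=1,\dots,N_s$, $t=1,\dots,T$) $$\sum_{t=1}^T\min\Big\{0,\sum_{i=1}^{N_s}(S_{i,t}-S_{i,t-1})\Big\}$$ subject to, for all $i,t$: $0\le S_{i,t}\le\overline{S}_i$ (multipliers $\lambda_{i,1t},\lambda_{i,2t}$); $-\overline{x}_i\le S_{i,t}-S_{i,t-1}\le\overline{x}_i$ (multipliers $\lambda_{i,3t},\lambda_{i,4t}$); $-p_t^-\le S_{i,t}-S_{i,t-1}\le p_t^+$ (multipliers $\lambda_{i,5t},\lambda_{i,6t}$); and for all $t$: $-p_t^-\le\sum_i(S_{i,t}-S_{i,t-1})\le p_t^+$ (multipliers $\lambda_{7t},\lambda_{8t}$). The $S_{i,0}$ are given constants. Profiles are equally likely. *)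

theory Defs
  imports Complex_Main
begin

definition pplus :: "real \<Rightarrow> real" where "pplus x = max x 0"
definition pminus :: "real \<Rightarrow> real" where "pminus x = max (- x) 0"

text \<open>Feasible set of problem (P2) for one profile p (hours 1..T), devices 1..Ns.
  S i t is the state of charge of device i at hour t; S i 0 is fixed to the given S0 i.\<close>
definition feasible_P2 ::
  "nat \<Rightarrow> nat \<Rightarrow> (nat \<Rightarrow> real) \<Rightarrow> (nat \<Rightarrow> real) \<Rightarrow> (nat \<Rightarrow> real) \<Rightarrow> (nat \<Rightarrow> real)
   \<Rightarrow> (nat \<Rightarrow> nat \<Rightarrow> real) \<Rightarrow> bool" where
  "feasible_P2 Ns T S0 Sbar xbar p S \<longleftrightarrow>
     (\<forall>i\<in>{1..Ns}. S i 0 = S0 i) \<and>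
     (\<forall>i\<in>{1..Ns}. \<forall>t\<in>{1..T}.
        0 \<le> S i t \<and> S i t \<le> Sbar i \<and>
        - xbar i \<le> S i t - S i (t - 1) \<and> S i t - S i (t - 1) \<le> xbar i \<and>
        - pminus (p t) \<le> S i t - S i (t - 1) \<and> S i t - S i (t - 1) \<le> pplus (p t)) \<and>
     (\<forall>t\<in>{1..T}.
        - pminus (p t) \<le> (\<Sum>i=1..Ns. S i t - S i (t - 1)) \<and>
        (\<Sum>i=1..Ns. S i t - S i (t - 1)) \<le> pplus (p t))"

definition obj_P2 :: "nat \<Rightarrow> nat \<Rightarrow> (nat \<Rightarrow> nat \<Rightarrow> real) \<Rightarrow> real" where
  "obj_P2 Ns T S = (\<Sum>t=1..T. min 0 (\<Sum>i=1..Ns. S i t - S i (t - 1)))"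

definition optval_P2 ::
  "nat \<Rightarrow> nat \<Rightarrow> (nat \<Rightarrow> real) \<Rightarrow> (nat \<Rightarrow> real) \<Rightarrow> (nat \<Rightarrow> real) \<Rightarrow> (nat \<Rightarrow> real) \<Rightarrow> real" where
  "optval_P2 Ns T S0 Sbar xbar p =
     Inf (obj_P2 Ns T ` {S. feasible_P2 Ns T S0 Sbar xbar p S})"

definition EUE ::
  "nat \<Rightarrow> nat \<Rightarrow> nat \<Rightarrow> (nat \<Rightarrow> nat \<Rightarrow> real) \<Rightarrow> (nat \<Rightarrow> real) \<Rightarrow> (nat \<Rightarrow> real)
   \<Rightarrow> (nat \<Rightarrow> real) \<Rightarrow> real" where
  "EUE N Ns T P S0 Sbar xbar =
     (1 / real N) * (\<Sum>k=1..N. (\<Sum>t=1..T. pminus (P k t)) + optval_P2 Ns T S0 Sbar xbar (P k))"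

definition piecewise_linear_nonneg :: "(real \<Rightarrow> real) \<Rightarrow> bool" where
  "piecewise_linear_nonneg f \<longleftrightarrow>
     (\<exists>xs :: real list. xs \<noteq> [] \<and> xs ! 0 = 0 \<and> sorted_wrt (<) xs \<and>
        (\<forall>j < length xs - 1. \<exists>c d. \<forall>\<theta>\<in>{xs ! j .. xs ! (j+1)}. f \<theta> = c * \<theta> + d) \<and>
        (\<exists>c d. \<forall>\<theta>\<ge>last xs. f \<theta> = c * \<theta> + d))"

end

theory Submission
  imports Defs
begin

text \<open>For each profile, the set of pairs \<open>(\<theta>, w)\<close> such that some schedule feasible for the
  parameters at \<open>\<theta>\<close> has objective at most \<open>w\<close> is the projection of a polyhedron, because the
  parameters enter the constraints linearly and the objective is linear on the feasible set.
  By Fourier-Motzkin elimination it is again cut out by finitely many linear inequalities in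
  \<open>(\<theta>, w)\<close>, so the optimal value is the maximum of finitely many lines in \<open>\<theta>\<close>: convex, continuous
  and piecewise linear. These properties survive nonnegative combinations, hence hold for EUE.
  Monotonicity holds because the feasible set only grows along the ray.\<close>

section \<open>Polyhedral predicates and Fourier-Motzkin elimination\<close>

definition linform :: "'v set \<Rightarrow> ('v \<Rightarrow> real) \<Rightarrow> ('v \<Rightarrow> real) \<Rightarrow> real" where
  "linform V a x = (\<Sum>j\<in>V. a j * x j)"

definition sat_ineqs :: "'v set \<Rightarrow> (('v \<Rightarrow> real) \<times> real) set \<Rightarrow> ('v \<Rightarrow> real) \<Rightarrow> bool" where
  "sat_ineqs V C x \<longleftrightarrow> (\<forall>c\<in>C. linform V (fst c) x \<le> snd c)"

definition polyhedral :: "'v set \<Rightarrow> (('v \<Rightarrow> real) \<Rightarrow> bool) \<Rightarrow> bool" where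
  "polyhedral V P \<longleftrightarrow> (\<exists>C. finite C \<and> (\<forall>x. P x \<longleftrightarrow> sat_ineqs V C x))"

definition affine_in :: "'v set \<Rightarrow> (('v \<Rightarrow> real) \<Rightarrow> real) \<Rightarrow> bool" where
  "affine_in V f \<longleftrightarrow> (\<exists>a c. \<forall>x. f x = linform V a x + c)"

lemma linform_fun_upd:
  assumes "finite V" "v \<in> V"
  shows "linform V a (x(v := y)) = linform (V - {v}) a x + a v * y"
proof -
  have "linform (V - {v}) a (x(v := y)) = linform (V - {v}) a x"
    unfolding linform_def by (rule sum.cong) auto
  then show ?thesis
    using assms unfolding linform_def by (simp add: sum.remove add.commute)
qed

lemma linform_add: "linform V (\<lambda>j. a j + b j) x = linform V a x + linform V b x"
  unfolding linform_def by (simp add: algebra_simps sum.distrib)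

lemma linform_scale: "linform V (\<lambda>j. r * a j) x = r * linform V a x"
  unfolding linform_def by (simp add: algebra_simps sum_distrib_left)

lemma linform_diff: "linform V (\<lambda>j. a j - b j) x = linform V a x - linform V b x"
  unfolding linform_def by (simp add: algebra_simps sum_subtractf)

lemma affine_in_const: "affine_in V (\<lambda>x. c)"
  unfolding affine_in_def linform_def by (rule exI[of _ "\<lambda>_. 0"]) auto

lemma affine_in_coordinate:
  assumes "finite V" "v \<in> V"
  shows "affine_in V (\<lambda>x. x v)"
proof -
  have "linform V (\<lambda>j. if j = v then 1 else 0) x = (\<Sum>j\<in>V. if j = v then x j else 0)" for x
    unfolding linform_def by (rule sum.cong) auto
  then have "linform V (\<lambda>j. if j = v then 1 else 0) x = x v" for x
    using assms by simp
  then show ?thesis unfolding affine_in_def by (metis add_0_right)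
qed

lemma affine_in_add:
  assumes "affine_in V f" "affine_in V g"
  shows "affine_in V (\<lambda>x. f x + g x)"
proof -
  obtain a c b d where "\<And>x. f x = linform V a x + c" "\<And>x. g x = linform V b x + d"
    using assms unfolding affine_in_def by metis
  then have "f x + g x = linform V (\<lambda>j. a j + b j) x + (c + d)" for x
    by (simp add: linform_add)
  then show ?thesis unfolding affine_in_def by blast
qed

lemma affine_in_scale:
  assumes "affine_in V f"
  shows "affine_in V (\<lambda>x. r * f x)"
proof -
  obtain a c where "\<And>x. f x = linform V a x + c"
    using assms unfolding affine_in_def by metis
  then have "r * f x = linform V (\<lambda>j. r * a j) x + r * c" for x
    by (simp add: linform_scale algebra_simps)
  then show ?thesis unfolding affine_in_def by blast
qed

lemma affine_in_uminus: "affine_in V f \<Longrightarrow> affine_in V (\<lambda>x. - f x)"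
  using affine_in_scale[of V f "- 1"] by simp

lemma affine_in_diff:
  "affine_in V f \<Longrightarrow> affine_in V g \<Longrightarrow> affine_in V (\<lambda>x. f x - g x)"
  using affine_in_add[of V f "\<lambda>x. - g x"] affine_in_uminus[of V g] by simp

lemma affine_in_sum:
  assumes "\<And>k. k \<in> K \<Longrightarrow> affine_in V (f k)"
  shows "affine_in V (\<lambda>x. \<Sum>k\<in>K. f k x)"
proof (cases "finite K")
  case True
  then show ?thesis using assms
    by (induction K rule: finite_induct) (auto intro: affine_in_const affine_in_add)
qed (simp add: affine_in_const)

lemma polyhedral_le:
  assumes "affine_in V f" "affine_in V g"
  shows "polyhedral V (\<lambda>x. f x \<le> g x)"
proof -
  obtain a c b d where "\<And>x. f x = linform V a x + c" "\<And>x. g x = linform V b x + d"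
    using assms unfolding affine_in_def by metis
  then have "f x \<le> g x \<longleftrightarrow> sat_ineqs V {(\<lambda>j. a j - b j, d - c)} x" for x
    unfolding sat_ineqs_def by (simp add: linform_diff algebra_simps)
  then show ?thesis unfolding polyhedral_def by blast
qed

lemma polyhedral_conj:
  assumes "polyhedral V P" "polyhedral V Q"
  shows "polyhedral V (\<lambda>x. P x \<and> Q x)"
proof -
  obtain C D where "finite C" "finite D"
    "\<And>x. P x \<longleftrightarrow> sat_ineqs V C x" "\<And>x. Q x \<longleftrightarrow> sat_ineqs V D x"
    using assms unfolding polyhedral_def by metis
  then show ?thesis unfolding polyhedral_def sat_ineqs_def
    by (intro exI[of _ "C \<union> D"]) auto
qed

lemma polyhedral_eq:
  "affine_in V f \<Longrightarrow> affine_in V g \<Longrightarrow> polyhedral V (\<lambda>x. f x = g x)"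
  using polyhedral_conj[OF polyhedral_le polyhedral_le, of V f g g f]
  by (simp add: order_eq_iff)

lemma polyhedral_ball:
  assumes "finite I" "\<And>i. i \<in> I \<Longrightarrow> polyhedral V (P i)"
  shows "polyhedral V (\<lambda>x. \<forall>i\<in>I. P i x)"
  using assms
proof (induction I rule: finite_induct)
  case empty
  then show ?case unfolding polyhedral_def sat_ineqs_def by (intro exI[of _ "{}"]) auto
next
  case (insert i I)
  then show ?case using polyhedral_conj[of V "P i" "\<lambda>x. \<forall>i\<in>I. P i x"] by simp
qed

definition fm_combine :: "'v \<Rightarrow> ('v \<Rightarrow> real) \<times> real \<Rightarrow> ('v \<Rightarrow> real) \<times> real \<Rightarrow> ('v \<Rightarrow> real) \<times> real"
  where "fm_combine v p q =
    (\<lambda>j. (- fst q v) * fst p j + fst p v * fst q j, (- fst q v) * snd p + fst p v * snd q)"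

definition fm_eliminate :: "'v \<Rightarrow> (('v \<Rightarrow> real) \<times> real) set \<Rightarrow> (('v \<Rightarrow> real) \<times> real) set"
  where "fm_eliminate v C = {c\<in>C. fst c v = 0} \<union>
    (\<lambda>(p, q). fm_combine v p q) ` ({p\<in>C. fst p v > 0} \<times> {q\<in>C. fst q v < 0})"

lemma finite_fm_eliminate: "finite C \<Longrightarrow> finite (fm_eliminate v C)"
  unfolding fm_eliminate_def by simp

lemma linform_fm_combine:
  "linform V (fst (fm_combine v p q)) x =
     (- fst q v) * linform V (fst p) x + fst p v * linform V (fst q) x"
  unfolding fm_combine_def fst_conv linform_add linform_scale ..

lemma sat_fm_eliminate:
  assumes V: "finite V" "v \<in> V" and sat: "sat_ineqs V C (x(v := y))"
  shows "sat_ineqs (V - {v}) (fm_eliminate v C) x"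
  unfolding sat_ineqs_def
proof
  have ineq: "linform (V - {v}) (fst c) x + fst c v * y \<le> snd c" if "c \<in> C" for c
    using sat that linform_fun_upd[OF V] unfolding sat_ineqs_def by metis
  fix c assume "c \<in> fm_eliminate v C"
  then consider "c \<in> C" "fst c v = 0"
    | p q where "p \<in> C" "fst p v > 0" "q \<in> C" "fst q v < 0" "c = fm_combine v p q"
    unfolding fm_eliminate_def by auto
  then show "linform (V - {v}) (fst c) x \<le> snd c"
  proof cases
    case 1
    then show ?thesis using ineq[of c] by simp
  next
    case 2
    define Lp Lq where "Lp = linform (V - {v}) (fst p) x" and "Lq = linform (V - {v}) (fst q) x"
    have "(- fst q v) * (Lp + fst p v * y) \<le> (- fst q v) * snd p"
      using ineq[of p] 2 unfolding Lp_def by (intro mult_left_mono) auto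
    moreover have "fst p v * (Lq + fst q v * y) \<le> fst p v * snd q"
      using ineq[of q] 2 unfolding Lq_def by (intro mult_left_mono) auto
    moreover have "(- fst q v) * (Lp + fst p v * y) + fst p v * (Lq + fst q v * y)
        = (- fst q v) * Lp + fst p v * Lq"
      by (simp add: algebra_simps)
    ultimately show ?thesis
      unfolding 2(5) linform_fm_combine Lp_def[symmetric] Lq_def[symmetric]
      unfolding fm_combine_def snd_conv by linarith
  qed
qed

text \<open>The value of the eliminated variable is chosen between the largest lower bound and the
  smallest upper bound that the remaining variables impose on it; the combined inequalities
  say exactly that every lower bound lies below every upper bound.\<close>

lemma ex_sat_if_sat_fm_eliminate:
  assumes V: "finite V" "v \<in> V" and C: "finite C"
    and sat: "sat_ineqs (V - {v}) (fm_eliminate v C) x"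
  shows "\<exists>y. sat_ineqs V C (x(v := y))"
proof -
  define Pos where "Pos = {c\<in>C. fst c v > 0}"
  define Neg where "Neg = {c\<in>C. fst c v < 0}"
  define bound where "bound c = (snd c - linform (V - {v}) (fst c) x) / fst c v" for c
  have zero: "linform (V - {v}) (fst c) x \<le> snd c" if "c \<in> C" "fst c v = 0" for c
    using sat that unfolding sat_ineqs_def fm_eliminate_def by auto
  have lower_le_upper: "bound q \<le> bound p" if "p \<in> Pos" "q \<in> Neg" for p q
  proof -
    have "linform (V - {v}) (fst (fm_combine v p q)) x \<le> snd (fm_combine v p q)"
      using sat that unfolding sat_ineqs_def fm_eliminate_def Pos_def Neg_def by blast
    then have "fst q v * (snd p - linform (V - {v}) (fst p) x)
        \<le> fst p v * (snd q - linform (V - {v}) (fst q) x)"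
      unfolding linform_fm_combine unfolding fm_combine_def snd_conv by (simp add: algebra_simps)
    then show ?thesis
      using that unfolding bound_def Pos_def Neg_def by (simp add: divide_simps) (simp add: algebra_simps)
  qed
  have sat_if_between: "sat_ineqs V C (x(v := y))"
    if "\<And>p. p \<in> Pos \<Longrightarrow> y \<le> bound p" "\<And>q. q \<in> Neg \<Longrightarrow> bound q \<le> y" for y
    unfolding sat_ineqs_def
  proof
    fix c assume c: "c \<in> C"
    consider "fst c v = 0" | "fst c v > 0" | "fst c v < 0" by linarith
    then have "linform (V - {v}) (fst c) x + fst c v * y \<le> snd c"
    proof cases
      case 1
      then show ?thesis using zero c by simp
    next
      case 2
      then show ?thesis using that(1)[of c] c unfolding Pos_def bound_def by (simp add: field_simps)
    next
      case 3
      then show ?thesis using that(2)[of c] c unfolding Neg_def bound_def by (simp add: field_simps)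
    qed
    then show "linform V (fst c) (x(v := y)) \<le> snd c"
      using linform_fun_upd[OF V] by metis
  qed
  have fin: "finite Pos" "finite Neg" using C by (auto simp: Pos_def Neg_def)
  consider "Pos \<noteq> {}" | "Pos = {}" "Neg \<noteq> {}" | "Pos = {}" "Neg = {}" by blast
  then show ?thesis
  proof cases
    case 1
    then show ?thesis using fin lower_le_upper
      by (intro exI[of _ "Min (bound ` Pos)"] sat_if_between) auto
  next
    case 2
    then show ?thesis using fin by (intro exI[of _ "Max (bound ` Neg)"] sat_if_between) auto
  next
    case 3
    then show ?thesis by (intro exI[of _ 0] sat_if_between) auto
  qed
qed

lemma polyhedral_ex_coordinate:
  assumes "finite V" "v \<in> V" "polyhedral V P"
  shows "polyhedral (V - {v}) (\<lambda>x. \<exists>y. P (x(v := y)))"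
proof -
  obtain C where C: "finite C" "\<And>x. P x \<longleftrightarrow> sat_ineqs V C x"
    using assms(3) unfolding polyhedral_def by blast
  have "(\<exists>y. P (x(v := y))) \<longleftrightarrow> sat_ineqs (V - {v}) (fm_eliminate v C) x" for x
    using C sat_fm_eliminate ex_sat_if_sat_fm_eliminate assms(1,2) by metis
  then show ?thesis
    using finite_fm_eliminate[OF C(1)] unfolding polyhedral_def by blast
qed

lemma polyhedral_ex_coordinates:
  assumes "finite V" "finite E" "E \<subseteq> V" "polyhedral V P"
  shows "polyhedral (V - E) (\<lambda>x. \<exists>y. P (\<lambda>j. if j \<in> E then y j else x j))"
  using assms(2,3)
proof (induction E rule: finite_induct)
  case empty
  then show ?case using assms(4) by simp
next
  case (insert e F)
  let ?Q = "\<lambda>x. \<exists>y. P (\<lambda>j. if j \<in> F then y j else x j)"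
  have "polyhedral (V - F - {e}) (\<lambda>x. \<exists>z. ?Q (x(e := z)))"
    using insert assms(1) by (intro polyhedral_ex_coordinate) auto
  moreover have "(\<exists>z. ?Q (x(e := z))) \<longleftrightarrow> (\<exists>y. P (\<lambda>j. if j \<in> insert e F then y j else x j))" for x
  proof
    assume "\<exists>z. ?Q (x(e := z))"
    then obtain z y where "P (\<lambda>j. if j \<in> F then y j else (x(e := z)) j)" by blast
    moreover have "(\<lambda>j. if j \<in> F then y j else (x(e := z)) j)
        = (\<lambda>j. if j \<in> insert e F then (y(e := z)) j else x j)"
      using insert(2) by auto
    ultimately show "\<exists>y. P (\<lambda>j. if j \<in> insert e F then y j else x j)" by metis
  next
    assume "\<exists>y. P (\<lambda>j. if j \<in> insert e F then y j else x j)"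
    then obtain y where "P (\<lambda>j. if j \<in> insert e F then y j else x j)" by blast
    moreover have "(\<lambda>j. if j \<in> insert e F then y j else x j)
        = (\<lambda>j. if j \<in> F then y j else (x(e := y e)) j)"
      using insert(2) by auto
    ultimately show "\<exists>z. ?Q (x(e := z))" by metis
  qed
  moreover have "V - F - {e} = V - insert e F" by auto
  ultimately show ?case by simp
qed

section \<open>Upper envelopes of finitely many lines\<close>

definition line :: "real \<times> real \<Rightarrow> real \<Rightarrow> real" where
  "line p t = fst p * t + snd p"

definition envelope :: "(real \<times> real) set \<Rightarrow> real \<Rightarrow> real" where
  "envelope A t = Max ((\<lambda>p. line p t) ` A)"

definition is_envelope :: "(real \<Rightarrow> real) \<Rightarrow> bool" where
  "is_envelope f \<longleftrightarrow> (\<exists>A. finite A \<and> A \<noteq> {} \<and> (\<forall>t\<ge>0. f t = envelope A t))"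

lemma line_le_envelope: "finite A \<Longrightarrow> p \<in> A \<Longrightarrow> line p t \<le> envelope A t"
  unfolding envelope_def by auto

lemma envelope_attained:
  assumes "finite A" "A \<noteq> {}"
  shows "\<exists>p\<in>A. line p t = envelope A t"
proof -
  have "envelope A t \<in> (\<lambda>p. line p t) ` A"
    unfolding envelope_def using assms by (intro Max_in) auto
  then show ?thesis by force
qed

lemma envelope_eqI:
  "finite A \<Longrightarrow> (\<And>q. q \<in> A \<Longrightarrow> line q t \<le> y) \<Longrightarrow> p \<in> A \<Longrightarrow> line p t = y \<Longrightarrow> envelope A t = y"
  unfolding envelope_def by (rule Max_eqI) auto

lemma is_envelope_const: "is_envelope (\<lambda>t. c)"
  unfolding is_envelope_def envelope_def line_def by (rule exI[of _ "{(0, c)}"]) simp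

lemma is_envelope_add:
  assumes "is_envelope f" "is_envelope g"
  shows "is_envelope (\<lambda>t. f t + g t)"
proof -
  obtain A B where A: "finite A" "A \<noteq> {}" "\<forall>t\<ge>0. f t = envelope A t"
    and B: "finite B" "B \<noteq> {}" "\<forall>t\<ge>0. g t = envelope B t"
    using assms unfolding is_envelope_def by metis
  define AB where "AB = (\<lambda>(p, q). (fst p + fst q, snd p + snd q)) ` (A \<times> B)"
  have AB: "finite AB" "AB \<noteq> {}" using A B by (auto simp: AB_def)
  have "envelope AB t = envelope A t + envelope B t" for t
  proof -
    obtain p q where p: "p \<in> A" "line p t = envelope A t" and q: "q \<in> B" "line q t = envelope B t"
      using envelope_attained A B by metis
    show ?thesis
    proof (rule envelope_eqI[OF AB(1)])
      fix r assume "r \<in> AB"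
      then obtain p' q' where "p' \<in> A" "q' \<in> B" "r = (fst p' + fst q', snd p' + snd q')"
        unfolding AB_def by auto
      moreover have "line p' t \<le> envelope A t" "line q' t \<le> envelope B t"
        using line_le_envelope A(1) B(1) calculation by auto
      ultimately show "line r t \<le> envelope A t + envelope B t"
        by (simp add: line_def algebra_simps)
    next
      show "(fst p + fst q, snd p + snd q) \<in> AB" using p q unfolding AB_def by force
      show "line (fst p + fst q, snd p + snd q) t = envelope A t + envelope B t"
        using p q by (simp add: line_def algebra_simps)
    qed
  qed
  then show ?thesis unfolding is_envelope_def using A B AB by metis
qed

lemma is_envelope_scale:
  assumes "is_envelope f" "r \<ge> 0"
  shows "is_envelope (\<lambda>t. r * f t)"
proof -
  obtain A where A: "finite A" "A \<noteq> {}" "\<forall>t\<ge>0. f t = envelope A t"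
    using assms(1) unfolding is_envelope_def by blast
  define rA where "rA = (\<lambda>p. (r * fst p, r * snd p)) ` A"
  have rA: "finite rA" "rA \<noteq> {}" using A by (auto simp: rA_def)
  have "envelope rA t = r * envelope A t" for t
  proof -
    obtain p where p: "p \<in> A" "line p t = envelope A t"
      using envelope_attained A by metis
    show ?thesis
    proof (rule envelope_eqI[OF rA(1)])
      fix q assume "q \<in> rA"
      then obtain q' where "q' \<in> A" "q = (r * fst q', r * snd q')"
        unfolding rA_def by auto
      moreover have "r * line q' t \<le> r * envelope A t"
        using line_le_envelope[OF A(1) \<open>q' \<in> A\<close>] assms(2) by (rule mult_left_mono)
      ultimately show "line q t \<le> r * envelope A t"
        by (simp add: line_def algebra_simps)
    next
      show "(r * fst p, r * snd p) \<in> rA" using p unfolding rA_def by force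
      show "line (r * fst p, r * snd p) t = r * envelope A t"
        by (simp add: p(2)[symmetric] line_def algebra_simps)
    qed
  qed
  then show ?thesis unfolding is_envelope_def using A rA by metis
qed

lemma is_envelope_sum:
  "(\<And>k. k \<in> K \<Longrightarrow> is_envelope (f k)) \<Longrightarrow> is_envelope (\<lambda>t. \<Sum>k\<in>K. f k t)"
proof (induction K rule: infinite_finite_induct)
  case (insert k K)
  then show ?case using is_envelope_add[of "f k" "\<lambda>t. \<Sum>k\<in>K. f k t"] by simp
qed (simp_all add: is_envelope_const)

lemma continuous_on_envelope: "finite A \<Longrightarrow> A \<noteq> {} \<Longrightarrow> continuous_on S (envelope A)"
proof (induction A rule: finite_ne_induct)
  case (singleton p)
  have "envelope {p} = (\<lambda>t. fst p * t + snd p)"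
    unfolding envelope_def line_def by simp
  then show ?case by (simp add: continuous_on_add continuous_on_mult_left)
next
  case (insert p A)
  then have "envelope (insert p A) = (\<lambda>t. max (line p t) (envelope A t))"
    unfolding envelope_def by (auto simp: fun_eq_iff)
  moreover have "continuous_on S (\<lambda>t. max (line p t) (envelope A t))"
    unfolding line_def
    by (intro continuous_on_max continuous_on_add continuous_on_mult_left continuous_on_id
        continuous_on_const insert.IH)
  ultimately show ?case by simp
qed

lemma is_envelope_continuous_on: "is_envelope f \<Longrightarrow> continuous_on {0..} f"
  unfolding is_envelope_def using continuous_on_envelope continuous_on_cong
  by (metis atLeast_iff)

lemma lines_cross_between:
  assumes "line q m \<le> line p m" "line p t < line q t"
  shows "\<exists>z. fst p \<noteq> fst q \<and> line p z = line q z \<and> min m t \<le> z \<and> z \<le> max m t \<and> z \<noteq> t"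
proof -
  define k e where "k = fst p - fst q" and "e = snd p - snd q"
  have m: "k * m + e \<ge> 0" and t: "k * t + e < 0"
    using assms unfolding k_def e_def line_def by (simp_all add: algebra_simps)
  then have "k \<noteq> 0" by auto
  define z where "z = - e / k"
  have "k * z + e = 0" using \<open>k \<noteq> 0\<close> unfolding z_def by simp
  then have "line p z = line q z" unfolding k_def e_def line_def by (simp add: algebra_simps)
  moreover have "min m t \<le> z \<and> z \<le> max m t \<and> z \<noteq> t"
  proof (cases "k > 0")
    case True
    then have "t < z" "z \<le> m" using m t unfolding z_def by (simp_all add: field_simps)
    then show ?thesis by auto
  next
    case False
    then have "z < t" "m \<le> z" using m t \<open>k \<noteq> 0\<close> unfolding z_def by (simp_all add: field_simps)
    then show ?thesis by auto
  qed
  ultimately show ?thesis using \<open>k \<noteq> 0\<close> unfolding k_def by auto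
qed

definition crossings :: "(real \<times> real) set \<Rightarrow> real set" where
  "crossings A = insert 0 {z. 0 < z \<and> (\<exists>p\<in>A. \<exists>q\<in>A. fst p \<noteq> fst q \<and> line p z = line q z)}"

lemma finite_crossings:
  assumes "finite A"
  shows "finite (crossings A)"
proof -
  have "{z. 0 < z \<and> (\<exists>p\<in>A. \<exists>q\<in>A. fst p \<noteq> fst q \<and> line p z = line q z)}
      \<subseteq> (\<lambda>(p, q). (snd q - snd p) / (fst p - fst q)) ` (A \<times> A)"
  proof
    fix z assume "z \<in> {z. 0 < z \<and> (\<exists>p\<in>A. \<exists>q\<in>A. fst p \<noteq> fst q \<and> line p z = line q z)}"
    then obtain p q where "p \<in> A" "q \<in> A" "fst p \<noteq> fst q" "line p z = line q z" by blast
    then have "z = (snd q - snd p) / (fst p - fst q)"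
      unfolding line_def by (simp add: field_simps)
    then show "z \<in> (\<lambda>(p, q). (snd q - snd p) / (fst p - fst q)) ` (A \<times> A)"
      using \<open>p \<in> A\<close> \<open>q \<in> A\<close> by force
  qed
  moreover have "finite ((\<lambda>(p, q). (snd q - snd p) / (fst p - fst q)) ` (A \<times> A))"
    using assms by simp
  ultimately show ?thesis unfolding crossings_def by (simp add: finite_subset)
qed

lemma envelope_eq_line_between_crossings:
  assumes A: "finite A" and p: "p \<in> A" "\<And>q. q \<in> A \<Longrightarrow> line q m \<le> line p m"
    and m: "u < m" "m < v" and u: "0 \<le> u" and t: "u \<le> t" "t \<le> v"
    and gap: "{u<..<v} \<inter> crossings A = {}"
  shows "envelope A t = line p t"
proof (rule envelope_eqI[OF A _ p(1) refl])
  fix q assume q: "q \<in> A"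
  show "line q t \<le> line p t"
  proof (rule ccontr)
    assume "\<not> line q t \<le> line p t"
    then obtain z where "fst p \<noteq> fst q" "line p z = line q z" "min m t \<le> z" "z \<le> max m t" "z \<noteq> t"
      using lines_cross_between[OF p(2)[OF q]] by force
    moreover have "u < z" "z < v" using calculation m t by auto
    ultimately have "z \<in> {u<..<v} \<inter> crossings A"
      using p(1) q u unfolding crossings_def by auto
    then show False using gap by blast
  qed
qed

lemma piecewise_linear_nonneg_from_breakpoints:
  assumes B: "finite B" "0 \<in> B" "B \<subseteq> {0..}"
    and between: "\<And>u v. u \<in> B \<Longrightarrow> v \<in> B \<Longrightarrow> u < v \<Longrightarrow> {u<..<v} \<inter> B = {} \<Longrightarrow>
       \<exists>c d. \<forall>t\<in>{u..v}. f t = c * t + d"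
    and beyond: "\<exists>c d. \<forall>t\<ge>Max B. f t = c * t + d"
  shows "piecewise_linear_nonneg f"
proof -
  define xs where "xs = sorted_list_of_set B"
  have set_xs: "set xs = B" and sorted: "sorted_wrt (<) xs" "sorted xs"
    using B(1) unfolding xs_def by simp_all
  have "xs \<noteq> []" using set_xs B(2) by auto
  have "xs ! 0 = Min B"
    using B(1,2) sorted_list_of_set_nonempty[of B] unfolding xs_def by (metis empty_iff nth_Cons_0)
  also have "Min B = 0" using B by (intro Min_eqI) auto
  finally have "xs ! 0 = 0" .
  have "last xs = Max B"
  proof (rule Max_eqI[symmetric])
    show "last xs \<in> B" using \<open>xs \<noteq> []\<close> set_xs by auto
    show "z \<le> last xs" if "z \<in> B" for z
      using that set_xs sorted_nth_mono[OF sorted(2)] \<open>xs \<noteq> []\<close>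
      by (auto simp: in_set_conv_nth last_conv_nth)
  qed (use B in simp)
  have "\<exists>c d. \<forall>t\<in>{xs ! j .. xs ! (j+1)}. f t = c * t + d" if j: "j < length xs - 1" for j
  proof (rule between)
    show "xs ! j \<in> B" "xs ! (j+1) \<in> B" using j set_xs by auto
    show "xs ! j < xs ! (j+1)" using sorted(1) j by (simp add: sorted_wrt_iff_nth_less)
    show "{xs ! j<..<xs ! (j+1)} \<inter> B = {}"
    proof (rule ccontr)
      assume "{xs ! j<..<xs ! (j+1)} \<inter> B \<noteq> {}"
      then obtain k where k: "k < length xs" "xs ! j < xs ! k" "xs ! k < xs ! (j+1)"
        using set_xs by (auto simp: in_set_conv_nth)
      then have "j < k" "k < j + 1"
        using sorted_nth_mono[OF sorted(2), of k j] sorted_nth_mono[OF sorted(2), of "j+1" k] j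
        by (fastforce, fastforce)
      then show False by simp
    qed
  qed
  then show ?thesis
    unfolding piecewise_linear_nonneg_def
    using \<open>xs \<noteq> []\<close> \<open>xs ! 0 = 0\<close> sorted(1) beyond \<open>last xs = Max B\<close> by metis
qed

lemma is_envelope_piecewise_linear:
  assumes "is_envelope f"
  shows "piecewise_linear_nonneg f"
proof -
  obtain A where A: "finite A" "A \<noteq> {}" "\<forall>t\<ge>0. f t = envelope A t"
    using assms unfolding is_envelope_def by blast
  have maximal_line: "\<exists>p\<in>A. \<forall>q\<in>A. line q m \<le> line p m" for m
    using envelope_attained[OF A(1,2)] line_le_envelope[OF A(1)] by metis
  have B: "finite (crossings A)" "0 \<in> crossings A" "crossings A \<subseteq> {0..}"
    using finite_crossings[OF A(1)] unfolding crossings_def by auto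
  show ?thesis
  proof (rule piecewise_linear_nonneg_from_breakpoints[OF B])
    fix u v assume uv: "u \<in> crossings A" "u < v" and gap: "{u<..<v} \<inter> crossings A = {}"
    obtain p where p: "p \<in> A" "\<forall>q\<in>A. line q ((u + v) / 2) \<le> line p ((u + v) / 2)"
      using maximal_line by blast
    have "f t = fst p * t + snd p" if "t \<in> {u..v}" for t
      using envelope_eq_line_between_crossings[OF A(1) p(1), of "(u + v) / 2" u v t] p(2) uv B(3)
        gap that A(3) unfolding line_def by force
    then show "\<exists>c d. \<forall>t\<in>{u..v}. f t = c * t + d" by blast
  next
    define u where "u = Max (crossings A)"
    have u: "u \<in> crossings A" "\<And>z. z \<in> crossings A \<Longrightarrow> z \<le> u"
      using B(1,2) unfolding u_def by (auto intro: Max_in)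
    obtain p where p: "p \<in> A" "\<forall>q\<in>A. line q (u + 1) \<le> line p (u + 1)"
      using maximal_line by blast
    have "f t = fst p * t + snd p" if "t \<ge> u" for t
    proof -
      have "{u<..<max t (u + 1) + 1} \<inter> crossings A = {}" using u(2) by force
      then show ?thesis
        using envelope_eq_line_between_crossings[OF A(1) p(1), of "u + 1" u "max t (u + 1) + 1" t]
          p(2) u(1) B(3) that A(3) unfolding line_def by force
    qed
    then show "\<exists>c d. \<forall>t\<ge>Max (crossings A). f t = c * t + d" unfolding u_def by blast
  qed
qed

section \<open>Infima over a polyhedral epigraph\<close>

lemma Inf_eq_Max_of_lower_bounds:
  fixes X :: "real set" and \<alpha> \<beta> :: "'c \<Rightarrow> real"
  assumes C: "finite C" and X: "X \<noteq> {}" "\<And>s. s \<in> X \<Longrightarrow> L \<le> s"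
    and upper: "\<And>w. (\<exists>s\<in>X. s \<le> w) \<longleftrightarrow> (\<forall>c\<in>C. \<alpha> c * w \<le> \<beta> c)"
  shows "{c\<in>C. \<alpha> c < 0} \<noteq> {} \<and> Inf X = Max ((\<lambda>c. \<beta> c / \<alpha> c) ` {c\<in>C. \<alpha> c < 0})"
proof -
  define Neg where "Neg = {c\<in>C. \<alpha> c < 0}"
  obtain s0 where s0: "s0 \<in> X" using X(1) by blast
  have s0_sat: "\<alpha> c * s0 \<le> \<beta> c" if "c \<in> C" for c
    using upper[of s0] s0 that by auto
  have sat_below_s0: "\<alpha> c * w \<le> \<beta> c" if "c \<in> C - Neg" "w \<le> s0" for c w
  proof -
    have "\<alpha> c * w \<le> \<alpha> c * s0" using that unfolding Neg_def by (intro mult_left_mono) auto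
    then show ?thesis using s0_sat[of c] that(1) by simp
  qed
  have "Neg \<noteq> {}"
  proof
    assume "Neg = {}"
    then obtain s where "s \<in> X" "s \<le> min s0 (L - 1)"
      using upper[of "min s0 (L - 1)"] sat_below_s0 by auto
    then show False using X(2) by fastforce
  qed
  define M where "M = Max ((\<lambda>c. \<beta> c / \<alpha> c) ` Neg)"
  have M_le: "M \<le> s" if "s \<in> X" for s
  proof -
    have "\<beta> c / \<alpha> c \<le> s" if "c \<in> Neg" for c
      using upper[of s] \<open>s \<in> X\<close> that unfolding Neg_def by (auto simp: divide_le_eq mult.commute)
    then show ?thesis
      unfolding M_def using C \<open>Neg \<noteq> {}\<close> by (simp add: Neg_def)
  qed
  have "\<alpha> c * M \<le> \<beta> c" if "c \<in> C" for c
  proof (cases "c \<in> Neg")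
    case True
    then have "\<beta> c / \<alpha> c \<le> M" unfolding M_def using C by (simp add: Neg_def)
    then show ?thesis using True unfolding Neg_def by (simp add: divide_le_eq mult.commute)
  next
    case False
    then show ?thesis using sat_below_s0 that M_le[OF s0] by blast
  qed
  then obtain s where "s \<in> X" "s \<le> M" using upper by blast
  then have "M \<in> X" using M_le antisym by metis
  then have "Inf X = M" using M_le by (rule cInf_eq_minimum)
  then show ?thesis using \<open>Neg \<noteq> {}\<close> unfolding M_def Neg_def by blast
qed

lemma is_envelope_Inf_if_polyhedral_epigraph:
  fixes X :: "real \<Rightarrow> real set"
  assumes poly: "polyhedral {u, v} (\<lambda>x. \<exists>s\<in>X (x u). s \<le> x v)" and "u \<noteq> v"
    and X: "\<And>\<theta>. \<theta> \<ge> 0 \<Longrightarrow> X \<theta> \<noteq> {}" "\<And>\<theta> s. \<theta> \<ge> 0 \<Longrightarrow> s \<in> X \<theta> \<Longrightarrow> L \<le> s"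
  shows "is_envelope (\<lambda>\<theta>. Inf (X \<theta>))"
proof -
  obtain C where C: "finite C" "\<And>x. (\<exists>s\<in>X (x u). s \<le> x v) \<longleftrightarrow> sat_ineqs {u, v} C x"
    using poly unfolding polyhedral_def by blast
  have upper: "(\<exists>s\<in>X \<theta>. s \<le> w) \<longleftrightarrow> (\<forall>c\<in>C. fst c v * w \<le> snd c - fst c u * \<theta>)" for \<theta> w
  proof -
    define x where "x = (\<lambda>j. if j = u then \<theta> else w)"
    have "linform {u, v} a x = a u * \<theta> + a v * w" for a
      unfolding linform_def x_def using \<open>u \<noteq> v\<close> by simp
    then show ?thesis
      using C(2)[of x] \<open>u \<noteq> v\<close> unfolding sat_ineqs_def x_def by (auto simp: algebra_simps)
  qed
  define Neg where "Neg = {c\<in>C. fst c v < 0}"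
  define A where "A = (\<lambda>c. (- fst c u / fst c v, snd c / fst c v)) ` Neg"
  have Inf_eq: "Neg \<noteq> {} \<and> Inf (X \<theta>) = Max ((\<lambda>c. (snd c - fst c u * \<theta>) / fst c v) ` Neg)"
    if "\<theta> \<ge> 0" for \<theta>
    unfolding Neg_def using C(1) X[OF that] upper by (rule Inf_eq_Max_of_lower_bounds)
  have "Inf (X \<theta>) = envelope A \<theta>" if "\<theta> \<ge> 0" for \<theta>
  proof -
    have "(\<lambda>p. line p \<theta>) ` A = (\<lambda>c. (snd c - fst c u * \<theta>) / fst c v) ` Neg"
      unfolding A_def image_image line_def Neg_def
      by (intro image_cong refl) (auto simp: field_simps)
    then show ?thesis using Inf_eq[OF that] unfolding envelope_def by simp
  qed
  moreover have "finite A" "A \<noteq> {}" using C(1) Inf_eq[of 0] by (auto simp: A_def Neg_def)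
  ultimately show ?thesis unfolding is_envelope_def by blast
qed

section \<open>Problem (P2) along a ray of parameters\<close>

lemma feasible_P2_constant_charge:
  assumes "\<forall>i\<in>{1..Ns}. 0 \<le> S0 i" "\<forall>i\<in>{1..Ns}. S0 i \<le> Sbar i" "\<forall>i\<in>{1..Ns}. 0 \<le> xbar i"
  shows "feasible_P2 Ns T S0 Sbar xbar p (\<lambda>i t. S0 i)"
  using assms unfolding feasible_P2_def pplus_def pminus_def by force

lemma feasible_P2_mono:
  assumes "\<forall>i\<in>{1..Ns}. Sbar i \<le> Sbar' i" "\<forall>i\<in>{1..Ns}. xbar i \<le> xbar' i"
    and "feasible_P2 Ns T S0 Sbar xbar p S"
  shows "feasible_P2 Ns T S0 Sbar' xbar' p S"
  using assms unfolding feasible_P2_def by (meson order_trans neg_le_iff_le)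

lemma feasible_P2_cong:
  assumes "\<forall>i\<in>{1..Ns}. \<forall>t\<le>T. S i t = S' i t"
  shows "feasible_P2 Ns T S0 Sbar xbar p S \<longleftrightarrow> feasible_P2 Ns T S0 Sbar xbar p S'"
proof -
  have "(\<Sum>i=1..Ns. S i t - S i (t - 1)) = (\<Sum>i=1..Ns. S' i t - S' i (t - 1))" if "t \<in> {1..T}" for t
    using assms that by (intro sum.cong) auto
  moreover have "S i (t - 1) = S' i (t - 1)" if "i \<in> {1..Ns}" "t \<in> {1..T}" for i t
    using assms that by auto
  ultimately show ?thesis using assms unfolding feasible_P2_def by auto
qed

text \<open>Feasibility pins the sign of the net discharge to that of the surplus, which makes the
  objective linear on the feasible set.\<close>

lemma obj_P2_feasible:
  assumes "feasible_P2 Ns T S0 Sbar xbar p S"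
  shows "obj_P2 Ns T S = (\<Sum>t\<in>{t\<in>{1..T}. p t < 0}. \<Sum>i=1..Ns. S i t - S i (t - 1))"
proof -
  have "min 0 (\<Sum>i=1..Ns. S i t - S i (t - 1)) = (if p t < 0 then \<Sum>i=1..Ns. S i t - S i (t - 1) else 0)"
    if "t \<in> {1..T}" for t
  proof -
    have "- pminus (p t) \<le> (\<Sum>i=1..Ns. S i t - S i (t - 1))" "(\<Sum>i=1..Ns. S i t - S i (t - 1)) \<le> pplus (p t)"
      using assms that unfolding feasible_P2_def by auto
    then show ?thesis unfolding pplus_def pminus_def by auto
  qed
  then have "obj_P2 Ns T S = (\<Sum>t=1..T. if p t < 0 then \<Sum>i=1..Ns. S i t - S i (t - 1) else 0)"
    unfolding obj_P2_def by (rule sum.cong[OF refl])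
  then show ?thesis by (subst sum.inter_filter) auto
qed

lemma obj_P2_lower_bound:
  assumes "feasible_P2 Ns T S0 Sbar xbar p S"
  shows "- (\<Sum>t=1..T. pminus (p t)) \<le> obj_P2 Ns T S"
proof -
  have "- pminus (p t) \<le> min 0 (\<Sum>i=1..Ns. S i t - S i (t - 1))" if "t \<in> {1..T}" for t
    using assms that unfolding feasible_P2_def pminus_def by auto
  then have "(\<Sum>t=1..T. - pminus (p t)) \<le> obj_P2 Ns T S"
    unfolding obj_P2_def by (intro sum_mono)
  then show ?thesis by (simp add: sum_negf)
qed

lemma optval_P2_antimono:
  assumes "\<forall>i\<in>{1..Ns}. Sbar i \<le> Sbar' i" "\<forall>i\<in>{1..Ns}. xbar i \<le> xbar' i"
    and "\<exists>S. feasible_P2 Ns T S0 Sbar xbar p S"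
  shows "optval_P2 Ns T S0 Sbar' xbar' p \<le> optval_P2 Ns T S0 Sbar xbar p"
  unfolding optval_P2_def
proof (rule cInf_superset_mono)
  show "obj_P2 Ns T ` {S. feasible_P2 Ns T S0 Sbar xbar p S} \<noteq> {}" using assms(3) by blast
  show "bdd_below (obj_P2 Ns T ` {S. feasible_P2 Ns T S0 Sbar' xbar' p S})"
    using obj_P2_lower_bound by (intro bdd_belowI) blast
  show "obj_P2 Ns T ` {S. feasible_P2 Ns T S0 Sbar xbar p S}
      \<subseteq> obj_P2 Ns T ` {S. feasible_P2 Ns T S0 Sbar' xbar' p S}"
    using feasible_P2_mono[OF assms(1,2)] by blast
qed

text \<open>The parameter \<open>\<theta>\<close> of the ray and the bound on the objective are carried by the
  coordinates \<open>(0, 0)\<close> and \<open>(0, 1)\<close>, which are free because devices are numbered from 1.\<close>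

lemma polyhedral_epigraph_optval_P2_ray:
  fixes Ns T :: nat
  shows "polyhedral {(0, 0), (0, 1)} (\<lambda>x :: nat \<times> nat \<Rightarrow> real. \<exists>s\<in>obj_P2 Ns T `
     {S. feasible_P2 Ns T S0 (\<lambda>j. Sbar j + al j * x (0, 0)) (\<lambda>j. xbar j + be j * x (0, 0)) p S}.
       s \<le> x (0, 1))"
proof -
  define D where "D = {1..Ns} \<times> {0..T}"
  define V where "V = {(0, 0), (0, 1)} \<union> D"
  define Q where "Q = (\<lambda>z. feasible_P2 Ns T S0 (\<lambda>j. Sbar j + al j * z (0, 0))
      (\<lambda>j. xbar j + be j * z (0, 0)) p (\<lambda>i t. z (i, t)) \<and>
    (\<Sum>t\<in>{t\<in>{1..T}. p t < 0}. \<Sum>i=1..Ns. z (i, t) - z (i, t - 1)) \<le> z (0, 1))"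
  have "finite V" "finite D" "D \<subseteq> V" unfolding V_def D_def by auto
  have "polyhedral V Q"
    unfolding Q_def feasible_P2_def
    by (intro polyhedral_conj polyhedral_ball polyhedral_le polyhedral_eq affine_in_const
        affine_in_coordinate affine_in_add affine_in_diff affine_in_uminus affine_in_scale
        affine_in_sum finite_atLeastAtMost finite_Collect_conjI \<open>finite V\<close>)
      (auto simp: V_def D_def)
  then have "polyhedral (V - D) (\<lambda>x. \<exists>y. Q (\<lambda>j. if j \<in> D then y j else x j))"
    using \<open>finite V\<close> \<open>finite D\<close> \<open>D \<subseteq> V\<close> by (intro polyhedral_ex_coordinates)
  moreover have "V - D = {(0, 0), (0, 1)}" unfolding V_def D_def by auto
  moreover have "(\<exists>y. Q (\<lambda>j. if j \<in> D then y j else x j)) \<longleftrightarrow>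
      (\<exists>S. feasible_P2 Ns T S0 (\<lambda>j. Sbar j + al j * x (0, 0)) (\<lambda>j. xbar j + be j * x (0, 0)) p S
        \<and> obj_P2 Ns T S \<le> x (0, 1))" for x
  proof
    assume "\<exists>y. Q (\<lambda>j. if j \<in> D then y j else x j)"
    then obtain y where "Q (\<lambda>j. if j \<in> D then y j else x j)" by blast
    moreover have "(0, 0) \<notin> D" "(0, 1) \<notin> D" unfolding D_def by auto
    ultimately show "\<exists>S. feasible_P2 Ns T S0 (\<lambda>j. Sbar j + al j * x (0, 0))
        (\<lambda>j. xbar j + be j * x (0, 0)) p S \<and> obj_P2 Ns T S \<le> x (0, 1)"
      unfolding Q_def using obj_P2_feasible by fastforce
  next
    assume "\<exists>S. feasible_P2 Ns T S0 (\<lambda>j. Sbar j + al j * x (0, 0))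
        (\<lambda>j. xbar j + be j * x (0, 0)) p S \<and> obj_P2 Ns T S \<le> x (0, 1)"
    then obtain S where S: "feasible_P2 Ns T S0 (\<lambda>j. Sbar j + al j * x (0, 0))
        (\<lambda>j. xbar j + be j * x (0, 0)) p S" "obj_P2 Ns T S \<le> x (0, 1)" by blast
    define z where "z = (\<lambda>j. if j \<in> D then case_prod S j else x j)"
    have z: "\<forall>i\<in>{1..Ns}. \<forall>t\<le>T. z (i, t) = S i t" "z (0, 0) = x (0, 0)" "z (0, 1) = x (0, 1)"
      unfolding z_def D_def by auto
    have "(\<Sum>t\<in>{t\<in>{1..T}. p t < 0}. \<Sum>i=1..Ns. z (i, t) - z (i, t - 1)) = obj_P2 Ns T S"
      using z(1) obj_P2_feasible[OF S(1)] by (auto intro!: sum.cong)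
    then have "Q z" unfolding Q_def using S feasible_P2_cong[OF z(1)] z(2,3) by simp
    then show "\<exists>y. Q (\<lambda>j. if j \<in> D then y j else x j)" unfolding z_def by blast
  qed
  ultimately show ?thesis by (simp add: image_iff)
qed

context
  fixes Ns T :: nat and S0 Sbar xbar al be :: "nat \<Rightarrow> real"
  assumes S0_nonneg: "\<forall>i\<in>{1..Ns}. 0 \<le> S0 i" and S0_le_Sbar: "\<forall>i\<in>{1..Ns}. S0 i \<le> Sbar i"
    and xbar_nonneg: "\<forall>i\<in>{1..Ns}. 0 \<le> xbar i"
    and al_nonneg: "\<forall>i\<in>{1..Ns}. 0 \<le> al i" and be_nonneg: "\<forall>i\<in>{1..Ns}. 0 \<le> be i"
begin

lemma feasible_P2_ray:
  assumes "\<theta> \<ge> 0"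
  shows "feasible_P2 Ns T S0 (\<lambda>j. Sbar j + al j * \<theta>) (\<lambda>j. xbar j + be j * \<theta>) p (\<lambda>i t. S0 i)"
  using S0_nonneg S0_le_Sbar xbar_nonneg al_nonneg be_nonneg assms
  by (intro feasible_P2_constant_charge) (auto intro: add_increasing2)

lemma is_envelope_optval_P2_ray:
  "is_envelope (\<lambda>\<theta>. optval_P2 Ns T S0 (\<lambda>j. Sbar j + al j * \<theta>) (\<lambda>j. xbar j + be j * \<theta>) p)"
  unfolding optval_P2_def
proof (rule is_envelope_Inf_if_polyhedral_epigraph[where u = "(0, 0) :: nat \<times> nat" and v = "(0, 1)"])
  show "polyhedral {(0, 0), (0, 1)} (\<lambda>x :: nat \<times> nat \<Rightarrow> real. \<exists>s\<in>obj_P2 Ns T `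
     {S. feasible_P2 Ns T S0 (\<lambda>j. Sbar j + al j * x (0, 0)) (\<lambda>j. xbar j + be j * x (0, 0)) p S}.
       s \<le> x (0, 1))"
    by (rule polyhedral_epigraph_optval_P2_ray)
  show "obj_P2 Ns T ` {S. feasible_P2 Ns T S0 (\<lambda>j. Sbar j + al j * \<theta>) (\<lambda>j. xbar j + be j * \<theta>) p S} \<noteq> {}"
    if "\<theta> \<ge> 0" for \<theta>
    using feasible_P2_ray[OF that] by blast
  show "- (\<Sum>t=1..T. pminus (p t)) \<le> s"
    if "s \<in> obj_P2 Ns T ` {S. feasible_P2 Ns T S0 (\<lambda>j. Sbar j + al j * \<theta>) (\<lambda>j. xbar j + be j * \<theta>) p S}"
    for \<theta> s
    using that obj_P2_lower_bound by blast
qed simp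

lemma optval_P2_ray_antimono:
  assumes "0 \<le> \<theta>" "\<theta> \<le> \<theta>'"
  shows "optval_P2 Ns T S0 (\<lambda>j. Sbar j + al j * \<theta>') (\<lambda>j. xbar j + be j * \<theta>') p
    \<le> optval_P2 Ns T S0 (\<lambda>j. Sbar j + al j * \<theta>) (\<lambda>j. xbar j + be j * \<theta>) p"
  using al_nonneg be_nonneg assms feasible_P2_ray[OF assms(1)]
  by (intro optval_P2_antimono) (auto intro: mult_left_mono)

lemma is_envelope_EUE_ray:
  "is_envelope (\<lambda>\<theta>. EUE N Ns T P S0 (\<lambda>j. Sbar j + al j * \<theta>) (\<lambda>j. xbar j + be j * \<theta>))"
  unfolding EUE_def
  by (intro is_envelope_scale is_envelope_sum is_envelope_add is_envelope_const
      is_envelope_optval_P2_ray) simp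

lemma EUE_ray_antimono:
  assumes "0 \<le> \<theta>" "\<theta> \<le> \<theta>'"
  shows "EUE N Ns T P S0 (\<lambda>j. Sbar j + al j * \<theta>') (\<lambda>j. xbar j + be j * \<theta>')
    \<le> EUE N Ns T P S0 (\<lambda>j. Sbar j + al j * \<theta>) (\<lambda>j. xbar j + be j * \<theta>)"
  unfolding EUE_def
  using optval_P2_ray_antimono[OF assms] by (intro mult_left_mono sum_mono add_left_mono) auto

end

lemma has_real_derivative_nonpos_if_antimono:
  fixes f :: "real \<Rightarrow> real"
  assumes antimono: "\<forall>t1 t2. 0 \<le> t1 \<longrightarrow> t1 \<le> t2 \<longrightarrow> f t2 \<le> f t1"
    and "t > 0" and deriv: "(f has_real_derivative D) (at t)"
  shows "D \<le> 0"
proof (rule ccontr)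
  assume "\<not> D \<le> 0"
  then obtain d where "d > 0" "\<And>h. 0 < h \<Longrightarrow> h < d \<Longrightarrow> f t < f (t + h)"
    using DERIV_pos_inc_right[OF deriv] by force
  then have "f t < f (t + d / 2)" by simp
  moreover have "f (t + d / 2) \<le> f t" using antimono \<open>t > 0\<close> \<open>d > 0\<close> by simp
  ultimately show False by simp
qed

theorem theorem2:
  fixes T Ns N :: nat and P :: "nat \<Rightarrow> nat \<Rightarrow> real"
    and S0 Sbar xbar :: "nat \<Rightarrow> real"
  assumes "T \<ge> 1" and "Ns \<ge> 1" and "N \<ge> 1"
    and "\<forall>i\<in>{1..Ns}. S0 i \<ge> 0"
    and "\<forall>i\<in>{1..Ns}. Sbar i \<ge> S0 i"
    and "\<forall>i\<in>{1..Ns}. xbar i \<ge> 0"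
  shows "(\<forall>k\<in>{1..N}. \<exists>S. feasible_P2 Ns T S0 Sbar xbar (P k) S) \<and>
    (\<forall>i\<in>{1..Ns}. \<forall>a b :: real. a \<ge> 0 \<longrightarrow> b \<ge> 0 \<longrightarrow> (a, b) \<noteq> (0, 0) \<longrightarrow>
      (let f = (\<lambda>\<theta>. EUE N Ns T P S0 (Sbar(i := Sbar i + a * \<theta>)) (xbar(i := xbar i + b * \<theta>)))
       in continuous_on {0..} f \<and> piecewise_linear_nonneg f \<and>
          (\<forall>\<theta>1 \<theta>2. 0 \<le> \<theta>1 \<longrightarrow> \<theta>1 \<le> \<theta>2 \<longrightarrow> f \<theta>2 \<le> f \<theta>1) \<and>
          (\<forall>\<theta> D. \<theta> > 0 \<longrightarrow> (f has_real_derivative D) (at \<theta>) \<longrightarrow> - D \<ge> 0)))"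
proof (intro conjI ballI allI impI)
  show "\<exists>S. feasible_P2 Ns T S0 Sbar xbar (P k) S" for k
    using feasible_P2_constant_charge assms(4-6) by blast
next
  fix i :: nat and a b :: real assume "a \<ge> 0" "b \<ge> 0"
  define al be where "al = (\<lambda>j. if j = i then a else 0)" and "be = (\<lambda>j. if j = i then b else 0)"
  define f where "f \<theta> = EUE N Ns T P S0 (\<lambda>j. Sbar j + al j * \<theta>) (\<lambda>j. xbar j + be j * \<theta>)" for \<theta>
  have "Sbar(i := Sbar i + a * \<theta>) = (\<lambda>j. Sbar j + al j * \<theta>)"
    "xbar(i := xbar i + b * \<theta>) = (\<lambda>j. xbar j + be j * \<theta>)" for \<theta>
    unfolding al_def be_def by (auto simp: fun_eq_iff)
  then have ray: "(\<lambda>\<theta>. EUE N Ns T P S0 (Sbar(i := Sbar i + a * \<theta>)) (xbar(i := xbar i + b * \<theta>))) = f"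
    unfolding f_def by simp
  have ray_nonneg: "\<forall>j\<in>{1..Ns}. 0 \<le> al j" "\<forall>j\<in>{1..Ns}. 0 \<le> be j"
    using \<open>a \<ge> 0\<close> \<open>b \<ge> 0\<close> unfolding al_def be_def by auto
  have "is_envelope f"
    unfolding f_def using assms(4-6) ray_nonneg by (rule is_envelope_EUE_ray)
  moreover have antimono: "\<forall>\<theta>1 \<theta>2. 0 \<le> \<theta>1 \<longrightarrow> \<theta>1 \<le> \<theta>2 \<longrightarrow> f \<theta>2 \<le> f \<theta>1"
    unfolding f_def using EUE_ray_antimono[OF assms(4-6) ray_nonneg] by blast
  ultimately show "let f = (\<lambda>\<theta>. EUE N Ns T P S0 (Sbar(i := Sbar i + a * \<theta>)) (xbar(i := xbar i + b * \<theta>)))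
       in continuous_on {0..} f \<and> piecewise_linear_nonneg f \<and>
          (\<forall>\<theta>1 \<theta>2. 0 \<le> \<theta>1 \<longrightarrow> \<theta>1 \<le> \<theta>2 \<longrightarrow> f \<theta>2 \<le> f \<theta>1) \<and>
          (\<forall>\<theta> D. \<theta> > 0 \<longrightarrow> (f has_real_derivative D) (at \<theta>) \<longrightarrow> - D \<ge> 0)"
    unfolding Let_def ray
    using is_envelope_continuous_on is_envelope_piecewise_linear
      has_real_derivative_nonpos_if_antimono[OF antimono] by auto
qed

end
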